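(* Let $f:\mathbb{R}^n_{>0}\to\mathbb{R}^n_{>0}$ be order-preserving and homogeneous, and let $J$ be a nonempty proper subset of $[n]$. Then there exists $x\in\mathbb{R}^n_{>0}$ such that $$\max_{j\in J}\frac{f(x)_j}{x_j}<\min_{i\in[n]\setminus J}\frac{f(x)_i}{x_i}$$ if and only if $r(f^J_0)<\lambda(f^{[n]\setminus J}_\infty)$.
   Context: $[n]=\{1,\dots,n\}$; entrywise order. Order-preserving: $x\le y\Rightarrow f(x)\le f(y)$; homogeneous: $f(tx)=tf(x)$ for $t>0$. $f$ extends continuously to order-preserving homogeneous maps $\mathbb{R}^n_{\ge0}\to\mathbb{R}^n_{\ge0}$ and $(0,\infty]^n\to(0,\infty]^n$, again denoted $f$. $P^J_\alpha(x)_j=x_j$ for $j\in J$, $\alpha$ otherwise; $f^J_0=P^J_0fP^J_0$, $f^J_\infty=P^J_\infty fP^J_\infty$. For $g$ order-preserving homogeneous on $\mathbb{R}^n_{\ge0}$ or $(0,\infty]^n$: $r(g)=\inf_{x\in\mathbb{R}^n_{>0}}\max_ig(x)_i/x_i$, $\lambda(g)=\sup_{x\in\mathbb{R}^n_{>0}}\min_ig(x)_i/x_i$ (values in $[0,\infty]$). *)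

theory Defs
  imports "HOL-Analysis.Analysis"
begin

text \<open>Vectors in R^n are modelled as real^'n for a finite index type 'n (so [n] = UNIV).\<close>

definition pos_vec :: "real^'n \<Rightarrow> bool" where
  "pos_vec x \<longleftrightarrow> (\<forall>i. 0 < x $ i)"

definition nonneg_vec :: "real^'n \<Rightarrow> bool" where
  "nonneg_vec x \<longleftrightarrow> (\<forall>i. 0 \<le> x $ i)"

definition order_preserving_pos :: "(real^'n \<Rightarrow> real^'n) \<Rightarrow> bool" where
  "order_preserving_pos f \<longleftrightarrow>
     (\<forall>x y. pos_vec x \<and> pos_vec y \<and> (\<forall>i. x $ i \<le> y $ i) \<longrightarrow> (\<forall>i. f x $ i \<le> f y $ i))"

definition homogeneous_pos :: "(real^'n \<Rightarrow> real^'n) \<Rightarrow> bool" where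
  "homogeneous_pos f \<longleftrightarrow> (\<forall>x t. pos_vec x \<and> 0 < t \<longrightarrow> f (t *\<^sub>R x) = t *\<^sub>R f x)"

text \<open>Continuous extension to the closed cone R^n_{\<ge>0}:
  f(x) = lim_{eps -> 0+} f(x + eps 1), which by monotonicity is the infimum.\<close>
definition ext0 :: "(real^'n \<Rightarrow> real^'n) \<Rightarrow> real^'n \<Rightarrow> real^'n" where
  "ext0 f x = (\<chi> i. Inf {f (x + (\<chi> j. e)) $ i | e. 0 < e})"

text \<open>Continuous extension to (0,\<infinity>]^n: f(x) = lim_{t -> \<infinity>} f(min(x, t 1)),
  by monotonicity the supremum.\<close>
definition ext_inf :: "(real^'n \<Rightarrow> real^'n) \<Rightarrow> ereal^'n \<Rightarrow> ereal^'n" where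
  "ext_inf f x = (\<chi> i. SUP t\<in>{0<..}. ereal (f (\<chi> j. real_of_ereal (min (x $ j) (ereal t))) $ i))"

definition P0 :: "'n set \<Rightarrow> real^'n \<Rightarrow> real^'n" where
  "P0 J x = (\<chi> j. if j \<in> J then x $ j else 0)"

definition Pinf :: "'n set \<Rightarrow> ereal^'n \<Rightarrow> ereal^'n" where
  "Pinf J x = (\<chi> j. if j \<in> J then x $ j else \<infinity>)"

definition f0 :: "'n set \<Rightarrow> (real^'n \<Rightarrow> real^'n) \<Rightarrow> real^'n \<Rightarrow> real^'n" where
  "f0 J f = P0 J \<circ> ext0 f \<circ> P0 J"

definition finf :: "'n set \<Rightarrow> (real^'n \<Rightarrow> real^'n) \<Rightarrow> ereal^'n \<Rightarrow> ereal^'n" where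
  "finf J f = Pinf J \<circ> ext_inf f \<circ> Pinf J"

definition cw_r :: "(real^'n::finite \<Rightarrow> real^'n) \<Rightarrow> ereal" where
  "cw_r g = (INF x\<in>{x. pos_vec x}. Max (range (\<lambda>i. ereal (g x $ i / x $ i))))"

definition cw_lambda :: "(ereal^'n::finite \<Rightarrow> ereal^'n) \<Rightarrow> ereal" where
  "cw_lambda g = (SUP x\<in>{x. pos_vec x}.
      Min (range (\<lambda>i. g (\<chi> j. ereal (x $ j)) $ i / ereal (x $ i))))"

end

theory Submission
  imports Defs
begin

text \<open>
  Write \<open>K\<close> for the complement of \<open>J\<close>. Both sides say that some real \<open>c\<close> separates
  the coordinates in \<open>J\<close> from those in \<open>K\<close>: the left side at one vector \<open>x\<close>, with
  \<open>f(x) < c x\<close> on \<open>J\<close> and \<open>f(x) > c x\<close> on \<open>K\<close>, the right side at two vectors,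
  \<open>f\<^sup>J\<^sub>0(y) < c y\<close> and \<open>f\<^sup>K\<^sub>\<infinity>(z) > c z\<close>. Going from one to two vectors is immediate
  since \<open>f\<^sup>J\<^sub>0 \<le> f\<close> on \<open>J\<close> and \<open>f\<^sup>K\<^sub>\<infinity> \<ge> f\<close> on \<open>K\<close>. Conversely, the extensions are
  monotone limits, so \<open>y\<close> and \<open>z\<close> may be replaced by positive vectors \<open>u\<close> and \<open>w\<close>
  with \<open>f(u) < c u\<close> on \<open>J\<close> and \<open>f(w) > c w\<close> on \<open>K\<close>. Scaling \<open>w\<close> down until
  \<open>\<beta> w \<le> u\<close>, the vector equal to \<open>u\<close> on \<open>J\<close> and to \<open>\<beta> w\<close> on \<open>K\<close> lies between
  \<open>\<beta> w\<close> and \<open>u\<close>, and monotonicity and homogeneity transfer both inequalities to it.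
\<close>

lemma order_preserving_posD:
  assumes "order_preserving_pos f" "pos_vec x" "pos_vec y" "\<And>i. x $ i \<le> y $ i"
  shows "f x $ i \<le> f y $ i"
  using assms unfolding order_preserving_pos_def by blast

lemma homogeneous_posD:
  assumes "homogeneous_pos f" "pos_vec x" "0 < t"
  shows "f (t *\<^sub>R x) $ i = t * f x $ i"
  using assms unfolding homogeneous_pos_def by simp

lemma pos_vec_nonneg_plus_const:
  assumes "nonneg_vec y" "0 < e"
  shows "pos_vec (y + (\<chi> j. e))"
  using assms unfolding pos_vec_def nonneg_vec_def by (simp add: add_nonneg_pos)

lemma nonneg_vec_P0: "pos_vec x \<Longrightarrow> nonneg_vec (P0 J x)"
  unfolding pos_vec_def nonneg_vec_def P0_def by (simp add: less_imp_le)

lemma f0_nth: "f0 J f x $ i = (if i \<in> J then ext0 f (P0 J x) $ i else 0)"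
  by (simp add: f0_def P0_def)

lemma finf_nth: "finf K f x $ i = (if i \<in> K then ext_inf f (Pinf K x) $ i else \<infinity>)"
  by (simp add: finf_def Pinf_def)

subsection \<open>The extension to the closed cone\<close>

lemma bdd_below_ext0_set:
  assumes "\<And>x. pos_vec x \<Longrightarrow> pos_vec (f x)" "nonneg_vec y"
  shows "bdd_below {f (y + (\<chi> j. e)) $ i | e. 0 < e}"
proof -
  have "0 \<le> f (y + (\<chi> j. e)) $ i" if "0 < e" for e
    using assms(1)[OF pos_vec_nonneg_plus_const[OF assms(2) that]]
    by (simp add: pos_vec_def less_imp_le)
  then show ?thesis
    unfolding bdd_below_def by blast
qed

lemma ext0_le:
  assumes fpos: "\<And>x. pos_vec x \<Longrightarrow> pos_vec (f x)" and op: "order_preserving_pos f"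
    and hom: "homogeneous_pos f" and y: "nonneg_vec y" and x: "pos_vec x"
    and yx: "\<And>j. y $ j \<le> x $ j"
  shows "ext0 f y $ i \<le> f x $ i"
proof -
  define m where "m = Min (range (\<lambda>j. x $ j))"
  have m: "0 < m" "\<And>j. m \<le> x $ j"
    using x unfolding m_def pos_vec_def by auto
  have fx: "0 < f x $ i"
    using fpos[OF x] unfolding pos_vec_def by auto
  have "ext0 f y $ i \<le> f x $ i + d" if "0 < d" for d
  proof -
    define e where "e = d * m / f x $ i"
    have e: "0 < e"
      using that m fx unfolding e_def by auto
    \<comment> \<open>Homogeneity gives continuity from above: \<open>y + e\<close> lies below \<open>(1 + e/m) x\<close>.\<close>
    have "y $ j + e \<le> (1 + e / m) * x $ j" for j
    proof -
      have "e \<le> e / m * x $ j"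
        using m(1) m(2)[of j] e by (simp add: field_simps)
      with yx[of j] show ?thesis
        by (simp add: algebra_simps)
    qed
    then have "f (y + (\<chi> j. e)) $ i \<le> f ((1 + e / m) *\<^sub>R x) $ i"
      using x e m(1) pos_vec_nonneg_plus_const[OF y e]
      by (intro order_preserving_posD[OF op]) (auto simp: pos_vec_def add_pos_pos)
    also have "\<dots> = (1 + e / m) * f x $ i"
      using homogeneous_posD[OF hom x] e m by (simp add: add_pos_pos)
    also have "\<dots> = f x $ i + d"
      unfolding e_def using m fx by (simp add: field_simps)
    finally have "f (y + (\<chi> j. e)) $ i \<le> f x $ i + d" .
    moreover have "ext0 f y $ i \<le> f (y + (\<chi> j. e)) $ i"
      unfolding ext0_def using e bdd_below_ext0_set[where f = f, OF fpos y] by (auto intro: cInf_lower)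
    ultimately show ?thesis by linarith
  qed
  then show ?thesis by (rule field_le_epsilon)
qed

lemma ext0_less_uniform:
  assumes fpos: "\<And>x. pos_vec x \<Longrightarrow> pos_vec (f x)" and op: "order_preserving_pos f"
    and y: "nonneg_vec y" and less: "\<And>i. i \<in> I \<Longrightarrow> ext0 f y $ i < c i"
  shows "\<exists>e>0. \<forall>i\<in>I. f (y + (\<chi> j. e)) $ i < c i"
proof -
  have "\<exists>e>0. f (y + (\<chi> j. e)) $ i < c i" if "i \<in> I" for i
  proof -
    have ne: "{f (y + (\<chi> j. e)) $ i | e. 0 < e} \<noteq> {}"
      using zero_less_one by blast
    have "Inf {f (y + (\<chi> j. e)) $ i | e. 0 < e} < c i"
      using less[OF that] by (simp add: ext0_def)
    then show ?thesis
      using cInf_less_iff[OF ne bdd_below_ext0_set[OF fpos y]] by blast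
  qed
  then obtain E where E: "\<And>i. i \<in> I \<Longrightarrow> 0 < E i \<and> f (y + (\<chi> j. E i)) $ i < c i"
    by metis
  define e where "e = Min (insert 1 (E ` I))"
  have e: "0 < e" "\<And>i. i \<in> I \<Longrightarrow> e \<le> E i"
    unfolding e_def using E by auto
  have "f (y + (\<chi> j. e)) $ i \<le> f (y + (\<chi> j. E i)) $ i" if "i \<in> I" for i
    using e E[OF that] that pos_vec_nonneg_plus_const[OF y]
    by (intro order_preserving_posD[OF op]) auto
  with E e show ?thesis
    by (meson order_le_less_trans)
qed

subsection \<open>The extension to the cone with infinite coordinates\<close>

definition trunc_vec :: "ereal^'n \<Rightarrow> real \<Rightarrow> real^'n" where
  "trunc_vec y t = (\<chi> j. real_of_ereal (min (y $ j) (ereal t)))"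

lemma ext_inf_nth: "ext_inf f y $ i = (SUP t\<in>{0<..}. ereal (f (trunc_vec y t) $ i))"
  by (simp add: ext_inf_def trunc_vec_def)

lemma trunc_vec_nth_Pinf:
  "trunc_vec (Pinf K (\<chi> j. ereal (z $ j))) t $ j = (if j \<in> K then min (z $ j) t else t)"
  by (auto simp: trunc_vec_def Pinf_def min_def)

lemma ereal_le_trunc_vec_nth:
  assumes "ereal a \<le> y $ j" "a \<le> t"
  shows "a \<le> trunc_vec y t $ j"
  using assms by (cases "y $ j") (auto simp: trunc_vec_def min_def)

lemma pos_vec_trunc_vec:
  assumes "\<And>j. 0 < y $ j" "0 < t"
  shows "pos_vec (trunc_vec y t)"
  unfolding pos_vec_def
proof
  show "0 < trunc_vec y t $ j" for j
    using assms(1)[of j] assms(2) by (cases "y $ j") (auto simp: trunc_vec_def min_def)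
qed

lemma trunc_vec_mono:
  assumes "\<And>j. 0 < y $ j" "s \<le> t"
  shows "trunc_vec y s $ j \<le> trunc_vec y t $ j"
  using assms(1)[of j] assms(2) by (cases "y $ j") (auto simp: trunc_vec_def min_def)

lemma ext_inf_ge:
  assumes op: "order_preserving_pos f" and x: "pos_vec x"
    and xy: "\<And>j. ereal (x $ j) \<le> y $ j"
  shows "ereal (f x $ i) \<le> ext_inf f y $ i"
proof -
  define t where "t = Max (range (\<lambda>j. x $ j))"
  have t: "0 < t" "\<And>j. x $ j \<le> t"
    using x unfolding t_def pos_vec_def by (auto intro: less_le_trans[OF _ Max_ge])
  have "0 < y $ j" for j
    using x xy[of j] unfolding pos_vec_def by (meson ereal_less(2) less_le_trans)
  then have "f x $ i \<le> f (trunc_vec y t) $ i"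
    using x t xy by (intro order_preserving_posD[OF op] ereal_le_trunc_vec_nth pos_vec_trunc_vec)
  also have "ereal (f (trunc_vec y t) $ i) \<le> ext_inf f y $ i"
    unfolding ext_inf_nth using t by (auto intro!: SUP_upper)
  finally show ?thesis by simp
qed

lemma ext_inf_greater_uniform:
  assumes op: "order_preserving_pos f" and y: "\<And>j. 0 < y $ j"
    and greater: "\<And>i. i \<in> I \<Longrightarrow> ereal (c i) < ext_inf f y $ i"
  shows "\<exists>t>0. \<forall>i\<in>I. c i < f (trunc_vec y t) $ i"
proof -
  have "\<exists>t>0. c i < f (trunc_vec y t) $ i" if "i \<in> I" for i
    using greater[OF that] by (auto simp: ext_inf_nth less_SUP_iff)
  then obtain T where T: "\<And>i. i \<in> I \<Longrightarrow> 0 < T i \<and> c i < f (trunc_vec y (T i)) $ i"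
    by metis
  define t where "t = Max (insert 1 (T ` I))"
  have t: "0 < t" "\<And>i. i \<in> I \<Longrightarrow> T i \<le> t"
    unfolding t_def by (auto intro: less_le_trans[OF zero_less_one])
  have "f (trunc_vec y (T i)) $ i \<le> f (trunc_vec y t) $ i" if "i \<in> I" for i
    using T[OF that] t that y
    by (intro order_preserving_posD[OF op] pos_vec_trunc_vec trunc_vec_mono) auto
  with T t show ?thesis
    by (meson order_less_le_trans)
qed

subsection \<open>Subeigenvectors and supereigenvectors\<close>

lemma cw_r_less_iff:
  "cw_r g < ereal c \<longleftrightarrow> (\<exists>x. pos_vec x \<and> (\<forall>i. g x $ i < c * x $ i))"
proof -
  have "ereal (g x $ i / x $ i) < ereal c \<longleftrightarrow> g x $ i < c * x $ i" if "pos_vec x" for x i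
    using that by (simp add: pos_vec_def divide_less_eq)
  then show ?thesis
    unfolding cw_r_def by (auto simp: INF_less_iff Max_less_iff)
qed

lemma cw_lambda_greater_iff:
  "ereal c < cw_lambda g \<longleftrightarrow>
     (\<exists>x. pos_vec x \<and> (\<forall>i. ereal (c * x $ i) < g (\<chi> j. ereal (x $ j)) $ i))"
proof -
  have "ereal c < Min (range (\<lambda>i. g (\<chi> j. ereal (x $ j)) $ i / ereal (x $ i))) \<longleftrightarrow>
        (\<forall>i. ereal (c * x $ i) < g (\<chi> j. ereal (x $ j)) $ i)" if "pos_vec x" for x
    using that by (simp add: Min_gr_iff pos_vec_def ereal_less_divide_iff mult.commute)
  then show ?thesis
    unfolding cw_lambda_def less_SUP_iff by blast
qed

lemma subeigen_imp_f0_subeigen: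
  assumes fpos: "\<And>x. pos_vec x \<Longrightarrow> pos_vec (f x)" and op: "order_preserving_pos f"
    and hom: "homogeneous_pos f" and x: "pos_vec x" and c: "0 < c"
    and sub: "\<And>j. j \<in> J \<Longrightarrow> f x $ j < c * x $ j"
  shows "f0 J f x $ i < c * x $ i"
proof (cases "i \<in> J")
  case True
  have "ext0 f (P0 J x) $ i \<le> f x $ i"
    using x by (intro ext0_le[OF fpos op hom nonneg_vec_P0]) (auto simp: P0_def pos_vec_def less_imp_le)
  with sub[OF True] True show ?thesis
    by (simp add: f0_nth)
next
  case False
  with x c show ?thesis
    by (simp add: f0_nth pos_vec_def)
qed

lemma supereigen_imp_finf_supereigen:
  assumes op: "order_preserving_pos f" and x: "pos_vec x"
    and super: "\<And>i. i \<in> K \<Longrightarrow> c * x $ i < f x $ i"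
  shows "ereal (c * x $ i) < finf K f (\<chi> j. ereal (x $ j)) $ i"
proof (cases "i \<in> K")
  case True
  have "ereal (c * x $ i) < ereal (f x $ i)"
    using super[OF True] by simp
  also have "\<dots> \<le> ext_inf f (Pinf K (\<chi> j. ereal (x $ j))) $ i"
    using x by (intro ext_inf_ge[OF op]) (auto simp: Pinf_def)
  finally show ?thesis
    using True by (simp add: finf_nth)
qed (simp add: finf_nth)

lemma f0_subeigen_imp_subeigen:
  assumes fpos: "\<And>x. pos_vec x \<Longrightarrow> pos_vec (f x)" and op: "order_preserving_pos f"
    and y: "pos_vec y" and c: "0 \<le> c"
    and sub: "\<And>j. j \<in> J \<Longrightarrow> f0 J f y $ j < c * y $ j"
  obtains u where "pos_vec u" "\<And>j. j \<in> J \<Longrightarrow> f u $ j < c * u $ j"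
proof -
  obtain e where e: "0 < e" and fe: "\<And>j. j \<in> J \<Longrightarrow> f (P0 J y + (\<chi> k. e)) $ j < c * y $ j"
    using ext0_less_uniform[OF fpos op nonneg_vec_P0[OF y, of J], where I = J and c = "\<lambda>j. c * y $ j"] sub
    by (auto simp: f0_nth)
  have "c * y $ j \<le> c * (P0 J y + (\<chi> k. e)) $ j" if "j \<in> J" for j
    using that mult_left_mono[of "y $ j" "y $ j + e" c] c e by (simp add: P0_def)
  with fe show ?thesis
    using that pos_vec_nonneg_plus_const[OF nonneg_vec_P0[OF y] e] by (meson order_less_le_trans)
qed

lemma finf_supereigen_imp_supereigen:
  assumes op: "order_preserving_pos f" and z: "pos_vec z" and c: "0 \<le> c"
    and super: "\<And>i. i \<in> K \<Longrightarrow> ereal (c * z $ i) < finf K f (\<chi> j. ereal (z $ j)) $ i"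
  obtains w where "pos_vec w" "\<And>i. i \<in> K \<Longrightarrow> c * w $ i < f w $ i"
proof -
  let ?y = "Pinf K (\<chi> j. ereal (z $ j))"
  have y: "0 < ?y $ j" for j
    using z by (simp add: Pinf_def pos_vec_def)
  obtain t where t: "0 < t" and ft: "\<And>i. i \<in> K \<Longrightarrow> c * z $ i < f (trunc_vec ?y t) $ i"
    using ext_inf_greater_uniform[OF op y, where I = K and c = "\<lambda>i. c * z $ i"] super by (auto simp: finf_nth)
  have "c * trunc_vec ?y t $ i \<le> c * z $ i" if "i \<in> K" for i
    using that c by (simp add: trunc_vec_nth_Pinf mult_left_mono)
  with ft show ?thesis
    using that pos_vec_trunc_vec[OF y t] by (meson order_le_less_trans)
qed

lemma glue_sub_supereigen:
  assumes op: "order_preserving_pos f" and hom: "homogeneous_pos f"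
    and u: "pos_vec u" and sub: "\<And>j. j \<in> J \<Longrightarrow> f u $ j < c * u $ j"
    and w: "pos_vec w" and super: "\<And>i. i \<notin> J \<Longrightarrow> c * w $ i < f w $ i"
  shows "\<exists>x. pos_vec x \<and> (\<forall>j\<in>J. f x $ j < c * x $ j) \<and> (\<forall>i\<in>-J. c * x $ i < f x $ i)"
proof -
  define \<beta> where "\<beta> = Min (range (\<lambda>k. u $ k / w $ k))"
  have "\<beta> \<le> u $ k / w $ k" for k
    unfolding \<beta>_def by simp
  with u w have \<beta>: "0 < \<beta>" "\<And>k. \<beta> * w $ k \<le> u $ k"
    unfolding \<beta>_def pos_vec_def by (auto simp: le_divide_eq)
  define x where "x = (\<chi> k. if k \<in> J then u $ k else \<beta> * w $ k)"
  have x: "pos_vec x"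
    using u w \<beta> unfolding x_def pos_vec_def by auto
  have bw: "pos_vec (\<beta> *\<^sub>R w)"
    using w \<beta> unfolding pos_vec_def by auto
  have "f x $ j < c * x $ j" if "j \<in> J" for j
  proof -
    have "f x $ j \<le> f u $ j"
      using \<beta> by (intro order_preserving_posD[OF op x u]) (simp add: x_def)
    with sub[OF that] that show ?thesis
      by (simp add: x_def)
  qed
  moreover have "c * x $ i < f x $ i" if "i \<notin> J" for i
  proof -
    have "c * x $ i = \<beta> * (c * w $ i)"
      using that by (simp add: x_def)
    also have "\<dots> < \<beta> * f w $ i"
      using super[OF that] \<beta> by simp
    also have "\<dots> = f (\<beta> *\<^sub>R w) $ i"
      using homogeneous_posD[OF hom w \<beta>(1)] by simp
    also have "\<dots> \<le> f x $ i"
      using \<beta> by (intro order_preserving_posD[OF op bw x]) (simp add: x_def)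
    finally show ?thesis .
  qed
  ultimately show ?thesis
    using x by auto
qed

lemma Max_ratio_less_Min_ratio_iff:
  fixes g x :: "real^'n::finite"
  assumes x: "pos_vec x" and "J \<noteq> {}" "J \<noteq> UNIV"
  shows "Max ((\<lambda>j. g $ j / x $ j) ` J) < Min ((\<lambda>i. g $ i / x $ i) ` (- J)) \<longleftrightarrow>
         (\<exists>c. (\<forall>j\<in>J. g $ j < c * x $ j) \<and> (\<forall>i\<in>-J. c * x $ i < g $ i))"
proof -
  have "g $ j / x $ j < c \<longleftrightarrow> g $ j < c * x $ j" "c < g $ j / x $ j \<longleftrightarrow> c * x $ j < g $ j"
    for j c using x by (simp_all add: pos_vec_def divide_less_eq less_divide_eq)
  note ratio = this
  have ne: "J \<noteq> {}" "- J \<noteq> {}"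
    using assms by auto
  show ?thesis
  proof
    assume "Max ((\<lambda>j. g $ j / x $ j) ` J) < Min ((\<lambda>i. g $ i / x $ i) ` (- J))"
    then obtain c where "Max ((\<lambda>j. g $ j / x $ j) ` J) < c" "c < Min ((\<lambda>i. g $ i / x $ i) ` (- J))"
      using dense by blast
    with ne have "\<forall>j\<in>J. g $ j < c * x $ j" "\<forall>i\<in>-J. c * x $ i < g $ i"
      by (simp_all add: Max_less_iff Min_gr_iff ratio)
    then show "\<exists>c. (\<forall>j\<in>J. g $ j < c * x $ j) \<and> (\<forall>i\<in>-J. c * x $ i < g $ i)"
      by blast
  next
    assume "\<exists>c. (\<forall>j\<in>J. g $ j < c * x $ j) \<and> (\<forall>i\<in>-J. c * x $ i < g $ i)"
    then obtain c where "\<forall>j\<in>J. g $ j < c * x $ j" "\<forall>i\<in>-J. c * x $ i < g $ i"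
      by blast
    with ne have "Max ((\<lambda>j. g $ j / x $ j) ` J) < c" "c < Min ((\<lambda>i. g $ i / x $ i) ` (- J))"
      by (simp_all add: Max_less_iff Min_gr_iff ratio)
    then show "Max ((\<lambda>j. g $ j / x $ j) ` J) < Min ((\<lambda>i. g $ i / x $ i) ` (- J))"
      by simp
  qed
qed

lemma separating_vector_imp_cw_bounds:
  assumes fpos: "\<And>x. pos_vec x \<Longrightarrow> pos_vec (f x)" and op: "order_preserving_pos f"
    and hom: "homogeneous_pos f" and "J \<noteq> {}" and x: "pos_vec x"
    and sub: "\<And>j. j \<in> J \<Longrightarrow> f x $ j < c * x $ j" and super: "\<And>i. i \<notin> J \<Longrightarrow> c * x $ i < f x $ i"
  shows "cw_r (f0 J f) < ereal c \<and> ereal c < cw_lambda (finf (- J) f)"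
proof -
  obtain j where "j \<in> J"
    using assms(4) by blast
  with sub[of j] fpos[OF x] x have c: "0 < c"
    unfolding pos_vec_def by (metis order.strict_trans zero_less_mult_pos2)
  have "cw_r (f0 J f) < ereal c"
    unfolding cw_r_less_iff using x subeigen_imp_f0_subeigen[OF fpos op hom x c sub] by blast
  moreover have "ereal c < cw_lambda (finf (- J) f)"
    unfolding cw_lambda_greater_iff using x supereigen_imp_finf_supereigen[OF op x, of "- J"] super by auto
  ultimately show ?thesis ..
qed

lemma cw_bounds_imp_separating_vector:
  assumes fpos: "\<And>x. pos_vec x \<Longrightarrow> pos_vec (f x)" and op: "order_preserving_pos f"
    and hom: "homogeneous_pos f" and "J \<noteq> UNIV"
    and r: "cw_r (f0 J f) < ereal c" and lambda: "ereal c < cw_lambda (finf (- J) f)"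
  shows "\<exists>x. pos_vec x \<and> (\<forall>j\<in>J. f x $ j < c * x $ j) \<and> (\<forall>i\<in>-J. c * x $ i < f x $ i)"
proof -
  obtain y where y: "pos_vec y" "\<And>i. f0 J f y $ i < c * y $ i"
    using r unfolding cw_r_less_iff by blast
  obtain z where z: "pos_vec z" "\<And>i. ereal (c * z $ i) < finf (- J) f (\<chi> j. ereal (z $ j)) $ i"
    using lambda unfolding cw_lambda_greater_iff by blast
  obtain i where "i \<notin> J"
    using assms(4) by blast
  with y have c: "0 \<le> c"
    unfolding pos_vec_def by (metis f0_nth less_le zero_less_mult_pos2)
  obtain u where "pos_vec u" "\<And>j. j \<in> J \<Longrightarrow> f u $ j < c * u $ j"
    using f0_subeigen_imp_subeigen[OF fpos op y(1) c] y(2) by blast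
  moreover obtain w where "pos_vec w" "\<And>i. i \<in> - J \<Longrightarrow> c * w $ i < f w $ i"
    using finf_supereigen_imp_supereigen[OF op z(1) c] z(2) by blast
  ultimately show ?thesis
    using glue_sub_supereigen[OF op hom] by (metis ComplI)
qed

theorem lemma3p3:
  fixes f :: "real^'n::finite \<Rightarrow> real^'n" and J :: "'n set"
  assumes "\<And>x. pos_vec x \<Longrightarrow> pos_vec (f x)"
    and "order_preserving_pos f"
    and "homogeneous_pos f"
    and "J \<noteq> {}" and "J \<noteq> UNIV"
  shows "(\<exists>x. pos_vec x \<and>
            Max ((\<lambda>j. f x $ j / x $ j) ` J) < Min ((\<lambda>i. f x $ i / x $ i) ` (- J)))
         \<longleftrightarrow> cw_r (f0 J f) < cw_lambda (finf (- J) f)"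
proof -
  have "(\<exists>c x. pos_vec x \<and> (\<forall>j\<in>J. f x $ j < c * x $ j) \<and> (\<forall>i\<in>-J. c * x $ i < f x $ i))
        \<longleftrightarrow> (\<exists>c. cw_r (f0 J f) < ereal c \<and> ereal c < cw_lambda (finf (- J) f))"
    using separating_vector_imp_cw_bounds[OF assms(1-4)]
      cw_bounds_imp_separating_vector[OF assms(1-3,5)] by (metis ComplI)
  then show ?thesis
    using Max_ratio_less_Min_ratio_iff[OF _ assms(4,5)] ereal_dense2 less_trans by meson
qed

end
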